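(* Let $X$ be a compact metric space, $r:X\to X$ a finite-to-one, onto, Borel measurable map, $\mu$ a strongly invariant Borel probability measure on $X$ such that $r$ is ergodic with respect to $\mu$, and $m_0$ a quadrature mirror filter on $X$ such that $|m_0|$ is not $\mu$-a.e. equal to $1$, $\mu(\{m_0=0\})=0$ and $\log|m_0|^2\in L^1(\mu)$. Then for $\mu_\infty$-almost every $z\in X_\infty$, $U_z$ is a unitary operator on $\mathcal H_z$, $\pi_z$ is a representation of the bounded Borel functions on $X$ on $\mathcal H_z$ satisfying $U_z\pi_z(f)U_z^{-1}=\pi_z(f\circ r)$, and the representation $[\mathcal H_z,U_z,\pi_z]$ is irreducible.
   Context: Strong invariance: $\int f\,d\mu=\int\frac{1}{\#r^{-1}(x)}\sum_{r(y)=x}f(y)\,d\mu(x)$ for bounded Borel $f$. QMF: Borel $m_0$ with $\frac{1}{\#r^{-1}(x)}\sum_{r(y)=x}|m_0(y)|^2=1$ for all $x$. $W(x)=|m_0(x)|^2/\#r^{-1}(r(x))$. Solenoid $X_\infty=\{(x_0,x_1,\dots)\in X^{\mathbb N}:r(x_{n+1})=x_n\}$, $r_\infty(x_0,x_1,\dots)=(r(x_0),x_0,x_1,\dots)$ (automorphism, inverse is the left shift), $\theta_0(x_0,\dots)=x_0$. $\mu_\infty$ is the measure on $X_\infty$ given by $\int f\,d\mu_\infty=\int_X\int_{\Omega_x}f\,dP_x\,d\mu(x)$, where $\Omega_x=\{(x_n)\in X_\infty:x_0=x\}$ and $P_x(x_1=z_1,\dots,x_n=z_n)=W(z_1)\cdots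 W(z_n)$. $\tilde m_0=1$, $\tilde m_n=\prod_{k=0}^{n-1}m_0\circ\theta_0\circ r_\infty^k$ ($n\ge1$), $\tilde m_n=1/\prod_{k=n}^{-1}m_0\circ\theta_0\circ r_\infty^k$ ($n<0$). For $z$ with all $\tilde m_n(z)\ne0$: $\mathcal H_z=\{(\xi_n)_{n\in\mathbb Z}:\sum|\xi_n|^2|\tilde m_n(z)|^2<\infty\}$ with inner product $\sum\xi_n\overline{\eta_n}|\tilde m_n(z)|^2$; $U_z(\xi_n)_n=(m_0(\theta_0(r_\infty^nz))\xi_{n+1})_n$; $\pi_z(f)(\xi_n)_n=(f(\theta_0(r_\infty^nz))\xi_n)_n$. Irreducible means the only operators commuting with $U_z$ and all $\pi_z(f)$ are scalar multiples of the identity. *)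

theory Defs
  imports "HOL-Probability.Probability"
begin

definition npre :: "('a \<Rightarrow> 'a) \<Rightarrow> 'a \<Rightarrow> real" where
  "npre r x = real (card (r -` {x}))"

definition strongly_invariant :: "('a::topological_space) measure \<Rightarrow> ('a \<Rightarrow> 'a) \<Rightarrow> bool" where
  "strongly_invariant \<mu> r \<longleftrightarrow>
     (\<forall>f::'a \<Rightarrow> real. f \<in> borel_measurable borel \<longrightarrow> bounded (range f) \<longrightarrow>
        integral\<^sup>L \<mu> f = integral\<^sup>L \<mu> (\<lambda>x. (1 / npre r x) * (\<Sum>y\<in>r -` {x}. f y)))"

definition ergodic_map :: "'a measure \<Rightarrow> ('a \<Rightarrow> 'a) \<Rightarrow> bool" where
  "ergodic_map \<mu> r \<longleftrightarrow>
     (\<forall>A\<in>sets \<mu>. r -` A = A \<longrightarrow> emeasure \<mu> A = 0 \<or> emeasure \<mu> A = 1)"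

definition QMF :: "('a \<Rightarrow> 'a) \<Rightarrow> ('a::topological_space \<Rightarrow> complex) \<Rightarrow> bool" where
  "QMF r m0 \<longleftrightarrow> m0 \<in> borel_measurable borel \<and>
     (\<forall>x. (1 / npre r x) * (\<Sum>y\<in>r -` {x}. (cmod (m0 y))\<^sup>2) = 1)"

definition Wf :: "('a \<Rightarrow> 'a) \<Rightarrow> ('a \<Rightarrow> complex) \<Rightarrow> 'a \<Rightarrow> real" where
  "Wf r m0 x = (cmod (m0 x))\<^sup>2 / npre r (r x)"

definition solenoid :: "('a \<Rightarrow> 'a) \<Rightarrow> (nat \<Rightarrow> 'a) set" where
  "solenoid r = {z. \<forall>n. r (z (Suc n)) = z n}"

definition rinf :: "('a \<Rightarrow> 'a) \<Rightarrow> (nat \<Rightarrow> 'a) \<Rightarrow> (nat \<Rightarrow> 'a)" where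
  "rinf r z = (\<lambda>n. case n of 0 \<Rightarrow> r (z 0) | Suc k \<Rightarrow> z k)"

definition lshift :: "(nat \<Rightarrow> 'a) \<Rightarrow> (nat \<Rightarrow> 'a)" where
  "lshift z = (\<lambda>n. z (Suc n))"

definition rinf_pow :: "('a \<Rightarrow> 'a) \<Rightarrow> int \<Rightarrow> (nat \<Rightarrow> 'a) \<Rightarrow> (nat \<Rightarrow> 'a)" where
  "rinf_pow r n z = (if 0 \<le> n then (rinf r ^^ nat n) z else (lshift ^^ nat (- n)) z)"

definition theta0 :: "(nat \<Rightarrow> 'a) \<Rightarrow> 'a" where
  "theta0 z = z 0"

text \<open>Finite paths x = y_0, y_1, ..., y_n with r(y_{k+1}) = y_k (tail normalised to x).\<close>
definition paths :: "('a \<Rightarrow> 'a) \<Rightarrow> 'a \<Rightarrow> nat \<Rightarrow> (nat \<Rightarrow> 'a) set" where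
  "paths r x n = {y. y 0 = x \<and> (\<forall>k<n. r (y (Suc k)) = y k) \<and> (\<forall>k>n. y k = x)}"

text \<open>mu_infinity, characterised by its values on cylinder sets
  (these form a generating pi-system, so this determines the measure uniquely).\<close>
definition is_mu_inf :: "('a::topological_space) measure \<Rightarrow> ('a \<Rightarrow> 'a) \<Rightarrow> ('a \<Rightarrow> complex)
     \<Rightarrow> (nat \<Rightarrow> 'a) measure \<Rightarrow> bool" where
  "is_mu_inf \<mu> r m0 M \<longleftrightarrow>
     sets M = sets (PiM UNIV (\<lambda>_::nat. (borel :: 'a measure))) \<and>
     (\<forall>n (A::nat \<Rightarrow> 'a set). (\<forall>k\<le>n. A k \<in> sets borel) \<longrightarrow>
        emeasure M {z\<in>space M. \<forall>k\<le>n. z k \<in> A k} =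
        (\<integral>\<^sup>+ x. ennreal (\<Sum>y\<in>paths r x n.
              (\<Prod>k\<in>{1..n}. Wf r m0 (y k)) * (\<Prod>k\<in>{0..n}. indicator (A k) (y k))) \<partial>\<mu>))"

definition mt :: "('a \<Rightarrow> 'a) \<Rightarrow> ('a \<Rightarrow> complex) \<Rightarrow> int \<Rightarrow> (nat \<Rightarrow> 'a) \<Rightarrow> complex" where
  "mt r m0 n z =
     (if n = 0 then 1
      else if 0 < n then (\<Prod>k\<in>{0..<n}. m0 (theta0 (rinf_pow r k z)))
      else 1 / (\<Prod>k\<in>{n..<0}. m0 (theta0 (rinf_pow r k z))))"

definition Hz :: "('a \<Rightarrow> 'a) \<Rightarrow> ('a \<Rightarrow> complex) \<Rightarrow> (nat \<Rightarrow> 'a) \<Rightarrow> (int \<Rightarrow> complex) set" where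
  "Hz r m0 z = {\<xi>. (\<lambda>n. (cmod (\<xi> n))\<^sup>2 * (cmod (mt r m0 n z))\<^sup>2) summable_on UNIV}"

definition Hip :: "('a \<Rightarrow> 'a) \<Rightarrow> ('a \<Rightarrow> complex) \<Rightarrow> (nat \<Rightarrow> 'a) \<Rightarrow> (int \<Rightarrow> complex) \<Rightarrow> (int \<Rightarrow> complex) \<Rightarrow> complex" where
  "Hip r m0 z \<xi> \<eta> = (\<Sum>\<^sub>\<infinity>n. \<xi> n * cnj (\<eta> n) * complex_of_real ((cmod (mt r m0 n z))\<^sup>2))"

definition Hnorm :: "('a \<Rightarrow> 'a) \<Rightarrow> ('a \<Rightarrow> complex) \<Rightarrow> (nat \<Rightarrow> 'a) \<Rightarrow> (int \<Rightarrow> complex) \<Rightarrow> real" where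
  "Hnorm r m0 z \<xi> = sqrt (\<Sum>\<^sub>\<infinity>n. (cmod (\<xi> n))\<^sup>2 * (cmod (mt r m0 n z))\<^sup>2)"

definition Uz :: "('a \<Rightarrow> 'a) \<Rightarrow> ('a \<Rightarrow> complex) \<Rightarrow> (nat \<Rightarrow> 'a) \<Rightarrow> (int \<Rightarrow> complex) \<Rightarrow> (int \<Rightarrow> complex)" where
  "Uz r m0 z \<xi> = (\<lambda>n. m0 (theta0 (rinf_pow r n z)) * \<xi> (n + 1))"

definition piz :: "('a \<Rightarrow> 'a) \<Rightarrow> (nat \<Rightarrow> 'a) \<Rightarrow> ('a \<Rightarrow> complex) \<Rightarrow> (int \<Rightarrow> complex) \<Rightarrow> (int \<Rightarrow> complex)" where
  "piz r z f \<xi> = (\<lambda>n. f (theta0 (rinf_pow r n z)) * \<xi> n)"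

definition bounded_borel :: "('a::topological_space \<Rightarrow> complex) \<Rightarrow> bool" where
  "bounded_borel f \<longleftrightarrow> f \<in> borel_measurable borel \<and> bounded (range f)"

definition bounded_op_on :: "(int \<Rightarrow> complex) set \<Rightarrow> ((int \<Rightarrow> complex) \<Rightarrow> real)
      \<Rightarrow> ((int \<Rightarrow> complex) \<Rightarrow> (int \<Rightarrow> complex)) \<Rightarrow> bool" where
  "bounded_op_on H nrm T \<longleftrightarrow>
     (\<forall>\<xi>\<in>H. T \<xi> \<in> H) \<and>
     (\<forall>\<xi>\<in>H. \<forall>\<eta>\<in>H. \<forall>c::complex. T (\<lambda>n. c * \<xi> n + \<eta> n) = (\<lambda>n. c * T \<xi> n + T \<eta> n)) \<and>
     (\<exists>C. \<forall>\<xi>\<in>H. nrm (T \<xi>) \<le> C * nrm \<xi>)"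

definition unitary_on_Hz :: "('a \<Rightarrow> 'a) \<Rightarrow> ('a \<Rightarrow> complex) \<Rightarrow> (nat \<Rightarrow> 'a) \<Rightarrow> bool" where
  "unitary_on_Hz r m0 z \<longleftrightarrow>
     bounded_op_on (Hz r m0 z) (Hnorm r m0 z) (Uz r m0 z) \<and>
     bij_betw (Uz r m0 z) (Hz r m0 z) (Hz r m0 z) \<and>
     (\<forall>\<xi>\<in>Hz r m0 z. \<forall>\<eta>\<in>Hz r m0 z. Hip r m0 z (Uz r m0 z \<xi>) (Uz r m0 z \<eta>) = Hip r m0 z \<xi> \<eta>)"

definition covariant_rep_Hz :: "('a::topological_space \<Rightarrow> 'a) \<Rightarrow> ('a \<Rightarrow> complex) \<Rightarrow> (nat \<Rightarrow> 'a) \<Rightarrow> bool" where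
  "covariant_rep_Hz r m0 z \<longleftrightarrow>
     (\<forall>f. bounded_borel f \<longrightarrow> bounded_op_on (Hz r m0 z) (Hnorm r m0 z) (piz r z f)) \<and>
     (\<forall>\<xi>\<in>Hz r m0 z. piz r z (\<lambda>_. 1) \<xi> = \<xi>) \<and>
     (\<forall>f g c. bounded_borel f \<longrightarrow> bounded_borel g \<longrightarrow> (\<forall>\<xi>\<in>Hz r m0 z.
        piz r z (\<lambda>x. c * f x + g x) \<xi> = (\<lambda>n. c * piz r z f \<xi> n + piz r z g \<xi> n) \<and>
        piz r z (\<lambda>x. f x * g x) \<xi> = piz r z f (piz r z g \<xi>))) \<and>
     (\<forall>f. bounded_borel f \<longrightarrow> (\<forall>\<xi>\<in>Hz r m0 z. \<forall>\<eta>\<in>Hz r m0 z.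
        Hip r m0 z (piz r z f \<xi>) \<eta> = Hip r m0 z \<xi> (piz r z (\<lambda>x. cnj (f x)) \<eta>))) \<and>
     (\<forall>f. bounded_borel f \<longrightarrow> (\<forall>\<xi>\<in>Hz r m0 z.
        Uz r m0 z (piz r z f (the_inv_into (Hz r m0 z) (Uz r m0 z) \<xi>)) = piz r z (f \<circ> r) \<xi>))"

definition irreducible_Hz :: "('a::topological_space \<Rightarrow> 'a) \<Rightarrow> ('a \<Rightarrow> complex) \<Rightarrow> (nat \<Rightarrow> 'a) \<Rightarrow> bool" where
  "irreducible_Hz r m0 z \<longleftrightarrow>
     (\<forall>T. bounded_op_on (Hz r m0 z) (Hnorm r m0 z) T \<longrightarrow>
        (\<forall>\<xi>\<in>Hz r m0 z. T (Uz r m0 z \<xi>) = Uz r m0 z (T \<xi>)) \<longrightarrow>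
        (\<forall>f. bounded_borel f \<longrightarrow> (\<forall>\<xi>\<in>Hz r m0 z. T (piz r z f \<xi>) = piz r z f (T \<xi>))) \<longrightarrow>
        (\<exists>c::complex. \<forall>\<xi>\<in>Hz r m0 z. T \<xi> = (\<lambda>n. c * \<xi> n)))"

end

theory Submission
  imports Defs
begin

text \<open>
  For almost every z in the solenoid measure three things hold: z lies in the solenoid,
  m0 does not vanish along the two-sided orbit x n = theta0 (r_inf^n z), and this orbit is
  injective. The first holds because the cylinders forcing r (z (n + 1)) \<noteq> z n carry no path
  weight, the second because W vanishes on {m0 = 0} and a strongly invariant measure pulls
  null sets back to null sets. For the third, the periodic points of r form a null set:
  strong invariance applied to the indicator of Fix (r^p) shows that almost every periodic
  point has a single preimage; the periodic points whose whole orbit has this property form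
  an r-invariant set on which the QMF condition forces |m0| = 1, so it is null by ergodicity.

  Given these, U_z is a weighted shift, isometric because
  |m_(n+1)|^2 = |m_n|^2 |m0 (x n)|^2, and pi_z acts diagonally. An operator commuting with every
  pi_z(f) is diagonal, since the indicators of the distinct points x n separate the
  coordinates, and commuting with U_z makes its diagonal constant.
\<close>

section \<open>Separating points of a compact metric space\<close>

lemma compact_finite_net:
  assumes "compact (UNIV :: 'a::metric_space set)" and "0 < e"
  shows "\<exists>C::'a set. finite C \<and> (\<forall>x. \<exists>c\<in>C. dist c x < e)"
proof -
  have cover: "UNIV \<subseteq> (\<Union>c\<in>UNIV. ball (c::'a) e)" using \<open>0 < e\<close> by auto
  obtain C :: "'a set" where "C \<subseteq> UNIV" "finite C" "UNIV \<subseteq> (\<Union>c\<in>C. ball c e)"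
    using compactE_image[OF assms(1) open_ball cover] .
  then show ?thesis by (auto simp: subset_eq)
qed

lemma compact_metric_separating_pairs:
  assumes "compact (UNIV :: 'a set)"
  obtains I :: "('a::metric_space set \<times> 'a set) set"
  where "countable I" and "\<And>p. p \<in> I \<Longrightarrow> open (fst p) \<and> open (snd p)"
    and "\<And>a b. a \<noteq> b \<longleftrightarrow> (\<exists>p\<in>I. a \<in> fst p \<and> b \<in> snd p)"
proof -
  have "\<forall>k::nat. \<exists>C::'a set. finite C \<and> (\<forall>x. \<exists>c\<in>C. dist c x < 1 / Suc k)"
    using compact_finite_net[OF assms] by simp
  then obtain C :: "nat \<Rightarrow> 'a set"
    where fin: "\<And>k. finite (C k)" and net: "\<And>k x. \<exists>c\<in>C k. dist c x < 1 / Suc k"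
    by (metis choice)
  define balls where "balls = (\<lambda>(k::nat, c::'a, d::'a). (ball c (1 / Suc k), ball d (1 / Suc k)))"
  define S where "S = {(k, c, d). c \<in> C k \<and> d \<in> C k \<and> fst (balls (k, c, d)) \<inter> snd (balls (k, c, d)) = {}}"
  have "S \<subseteq> (SIGMA k:UNIV. C k \<times> C k)"
    unfolding S_def by auto
  moreover have "countable (SIGMA k:UNIV. C k \<times> C k)"
    using fin by (intro countable_SIGMA) (auto intro: countable_finite)
  ultimately have "countable (balls ` S)"
    by (meson countable_image countable_subset)
  moreover have "\<exists>p\<in>balls ` S. a \<in> fst p \<and> b \<in> snd p" if "a \<noteq> b" for a b
  proof -
    obtain k :: nat where k: "1 / Suc k < dist a b / 4"
      using \<open>a \<noteq> b\<close> by (metis nat_approx_posE zero_less_dist_iff zero_less_divide_iff zero_less_numeral)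
    obtain c d where c: "c \<in> C k" "dist c a < 1 / Suc k" and d: "d \<in> C k" "dist d b < 1 / Suc k"
      using net[of k a] net[of k b] by blast
    have "ball c (1 / Suc k) \<inter> ball d (1 / Suc k) = {}"
    proof (rule ccontr)
      assume "ball c (1 / Suc k) \<inter> ball d (1 / Suc k) \<noteq> {}"
      then obtain w where "dist c w < 1 / Suc k" "dist d w < 1 / Suc k" by auto
      with c d k show False
        using dist_triangle[of a b w] dist_triangle[of a w c] dist_triangle[of w b d]
        by (simp add: dist_commute)
    qed
    then have "(k, c, d) \<in> S" using c d unfolding S_def balls_def by simp
    moreover have "a \<in> fst (balls (k, c, d)) \<and> b \<in> snd (balls (k, c, d))"
      using c d by (simp add: balls_def dist_commute)
    ultimately show ?thesis by blast
  qed
  moreover have "fst p \<inter> snd p = {}" and "open (fst p) \<and> open (snd p)" if "p \<in> balls ` S" for p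
    using that unfolding S_def balls_def by auto
  ultimately show ?thesis
    by (intro that[of "balls ` S"]) (simp, simp, metis disjoint_iff)
qed

lemma sets_Collect_eq_compact_metric:
  fixes f g :: "'b \<Rightarrow> 'a::metric_space"
  assumes "compact (UNIV :: 'a set)"
    and f: "f \<in> borel_measurable M" and g: "g \<in> borel_measurable M"
  shows "{w \<in> space M. f w = g w} \<in> sets M"
proof -
  obtain I :: "('a set \<times> 'a set) set" where "countable I"
    and I_open: "\<And>p. p \<in> I \<Longrightarrow> open (fst p) \<and> open (snd p)"
    and I_sep: "\<And>a b. a \<noteq> b \<longleftrightarrow> (\<exists>p\<in>I. a \<in> fst p \<and> b \<in> snd p)"
    using compact_metric_separating_pairs[OF assms(1)] by blast
  have "{w \<in> space M. f w \<in> fst p \<and> g w \<in> snd p} \<in> sets M" if "p \<in> I" for p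
  proof -
    have "{w \<in> space M. f w \<in> fst p \<and> g w \<in> snd p} = (f -` fst p \<inter> space M) \<inter> (g -` snd p \<inter> space M)"
      by auto
    then show ?thesis
      using I_open[OF that] by (auto intro!: sets.Int measurable_sets[OF f] measurable_sets[OF g])
  qed
  then have "{w \<in> space M. \<exists>p\<in>I. f w \<in> fst p \<and> g w \<in> snd p} \<in> sets M"
    using \<open>countable I\<close> by (intro sets.sets_Collect_countable_Ex') auto
  then have "space M - {w \<in> space M. \<exists>p\<in>I. f w \<in> fst p \<and> g w \<in> snd p} \<in> sets M"
    by blast
  moreover have "space M - {w \<in> space M. \<exists>p\<in>I. f w \<in> fst p \<and> g w \<in> snd p} = {w \<in> space M. f w = g w}"
    using I_sep by blast
  ultimately show ?thesis by simp
qed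

lemma sets_periodic_points:
  assumes "compact (UNIV :: 'a::metric_space set)" and "r \<in> borel_measurable (borel :: 'a measure)"
  shows "{x::'a. (r ^^ p) x = x} \<in> sets borel"
  using sets_Collect_eq_compact_metric[OF assms(1) measurable_compose_n[OF assms(2)] measurable_ident]
  by simp

section \<open>Strong invariance and periodic points\<close>

lemma npre_pos:
  assumes "\<forall>x. finite (r -` {x})" and "surj r"
  shows "0 < npre r x"
proof -
  obtain y where "r y = x" using \<open>surj r\<close> by (metis surjD)
  then show ?thesis
    using assms(1) unfolding npre_def by (metis card_gt_0_iff empty_iff of_nat_0_less_iff vimage_singleton_eq)
qed

lemma strongly_invariant_measure:
  assumes "strongly_invariant \<mu> r" "prob_space \<mu>" "sets \<mu> = sets borel" "A \<in> sets borel"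
  shows "measure \<mu> A = integral\<^sup>L \<mu> (\<lambda>x. (1 / npre r x) * (\<Sum>y\<in>r -` {x}. indicator A y))"
proof -
  interpret prob_space \<mu> by fact
  have "bounded (range (indicator A :: 'a \<Rightarrow> real))"
    by (rule bounded_subset[of "{0, 1}"]) (auto simp: indicator_def)
  then have "integral\<^sup>L \<mu> (indicator A :: 'a \<Rightarrow> real) =
      integral\<^sup>L \<mu> (\<lambda>x. (1 / npre r x) * (\<Sum>y\<in>r -` {x}. indicator A y))"
    using assms(1) borel_measurable_indicator[OF assms(4)] unfolding strongly_invariant_def by blast
  then show ?thesis using assms(3,4) sets_eq_imp_space_eq[OF assms(3)] by simp
qed

lemma strongly_invariant_emeasure_vimage:
  assumes "strongly_invariant \<mu> r" "prob_space \<mu>" "sets \<mu> = sets borel"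
    and "\<forall>x. finite (r -` {x})" "surj r" "r \<in> borel_measurable borel" "A \<in> sets borel"
  shows "emeasure \<mu> (r -` A) = emeasure \<mu> A"
proof -
  interpret prob_space \<mu> by fact
  have "r -` A \<in> sets borel" using assms(6,7) by (rule measurable_sets_borel)
  have "(1 / npre r x) * (\<Sum>y\<in>r -` {x}. indicator (r -` A) y) = indicator A x" for x
    using npre_pos[OF assms(4,5), of x] by (simp add: npre_def indicator_def)
  then have "measure \<mu> (r -` A) = integral\<^sup>L \<mu> (indicator A)"
    using strongly_invariant_measure[OF assms(1-3) \<open>r -` A \<in> sets borel\<close>] by simp
  also have "\<dots> = measure \<mu> A"
    using assms(3,7) sets_eq_imp_space_eq[OF assms(3)] by simp
  finally have "measure \<mu> (r -` A) = measure \<mu> A" .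
  then show ?thesis by (simp add: emeasure_eq_measure)
qed

lemma strongly_invariant_emeasure_vimage_funpow:
  assumes "strongly_invariant \<mu> r" "prob_space \<mu>" "sets \<mu> = sets borel"
    and "\<forall>x. finite (r -` {x})" "surj r" "r \<in> borel_measurable borel" "A \<in> sets borel"
  shows "emeasure \<mu> ((r ^^ j) -` A) = emeasure \<mu> A"
proof (induction j)
  case (Suc j)
  have "(r ^^ j) -` A \<in> sets borel"
    using measurable_compose_n[OF assms(6)] assms(7) by (rule measurable_sets_borel)
  have "emeasure \<mu> ((r ^^ Suc j) -` A) = emeasure \<mu> (r -` ((r ^^ j) -` A))"
    by (simp only: funpow_Suc_right vimage_comp)
  also have "\<dots> = emeasure \<mu> ((r ^^ j) -` A)"
    by (rule strongly_invariant_emeasure_vimage[OF assms(1-6) \<open>(r ^^ j) -` A \<in> sets borel\<close>])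
  also have "\<dots> = emeasure \<mu> A"
    by (rule Suc.IH)
  finally show ?case .
qed simp

lemma vimage_inter_periodic_points:
  assumes "0 < p"
  shows "r -` {x} \<inter> {y. (r ^^ p) y = y} = (if (r ^^ p) x = x then {(r ^^ (p - 1)) x} else {})"
proof -
  obtain q where p: "p = Suc q" using assms gr0_implies_Suc by blast
  have "r y = x \<and> (r ^^ Suc q) y = y \<longleftrightarrow> (r ^^ Suc q) x = x \<and> y = (r ^^ q) x" for y
    by (metis funpow_Suc_right funpow_swap1 comp_apply)
  then show ?thesis unfolding p by auto
qed

lemma strongly_invariant_AE_unique_preimage:
  assumes "strongly_invariant \<mu> r" "prob_space \<mu>" "sets \<mu> = sets borel"
    and "\<forall>x. finite (r -` {x})" "surj r" "Q \<in> sets borel"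
    and balanced: "\<And>x. (\<Sum>y\<in>r -` {x}. indicator Q y) = (indicator Q x :: real)"
  shows "AE x in \<mu>. x \<in> Q \<longrightarrow> npre r x = 1"
proof -
  interpret prob_space \<mu> by fact
  have Q: "Q \<in> sets \<mu>" using assms(3,6) by simp
  define h where "h = (\<lambda>x. indicator Q x / npre r x)"
  have "measure \<mu> Q = integral\<^sup>L \<mu> h"
    using strongly_invariant_measure[OF assms(1-3,6)] by (simp add: balanced h_def)
  have npre_ge_1: "1 \<le> npre r x" for x
    using npre_pos[OF assms(4,5), of x] by (simp add: npre_def)
  have h_le: "0 \<le> h x \<and> h x \<le> indicator Q x" for x
    using npre_ge_1[of x] by (auto simp: h_def indicator_def)
  show ?thesis
  proof (cases "integrable \<mu> h")
    case False
    then have "measure \<mu> Q = 0"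
      using \<open>measure \<mu> Q = integral\<^sup>L \<mu> h\<close> by (simp add: not_integrable_integral_eq)
    then have "Q \<in> null_sets \<mu>"
      using Q by (simp add: emeasure_eq_measure null_sets_def)
    then show ?thesis by (rule AE_mp[OF AE_not_in]) simp
  next
    case True
    have "integrable \<mu> (\<lambda>x. indicator Q x - h x)"
      using True Q by (intro Bochner_Integration.integrable_diff) (auto simp: less_top[symmetric])
    moreover have "integral\<^sup>L \<mu> (\<lambda>x. indicator Q x - h x) = 0"
      using True Q \<open>measure \<mu> Q = integral\<^sup>L \<mu> h\<close> by (subst Bochner_Integration.integral_diff) (auto simp: less_top[symmetric])
    ultimately have "AE x in \<mu>. indicator Q x - h x = 0"
      using h_le by (subst integral_nonneg_eq_0_iff_AE[symmetric]) auto
    then show ?thesis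
    proof (rule AE_mp, intro AE_I2 impI)
      fix x assume "indicator Q x - h x = 0" "x \<in> Q"
      then show "npre r x = 1" using npre_ge_1[of x] by (simp add: h_def field_simps)
    qed
  qed
qed

lemma QMF_norm_eq_1_if_unique_preimage:
  assumes "QMF r m0" and "card (r -` {r x}) = 1"
  shows "cmod (m0 x) = 1"
proof -
  have "r -` {r x} = {x}"
    using assms(2) by (metis card_1_singletonE singletonD vimage_singleton_eq)
  then have "(cmod (m0 x))\<^sup>2 = 1"
    using assms unfolding QMF_def npre_def by (metis card.empty card.insert empty_iff
      finite.emptyI div_by_1 mult_1 of_nat_1 sum.empty sum.insert add.right_neutral)
  then show ?thesis using norm_ge_zero[of "m0 x"] by (smt (verit) power2_eq_1_iff)
qed

lemma ergodic_unique_preimage_set_null: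
  assumes "ergodic_map \<mu> r" "prob_space \<mu>" "QMF r m0" "\<not> (AE x in \<mu>. cmod (m0 x) = 1)"
    and E: "E \<in> sets \<mu>" "r -` E = E" and unique: "\<And>x. x \<in> E \<Longrightarrow> card (r -` {x}) = 1"
  shows "emeasure \<mu> E = 0"
proof (rule ccontr)
  interpret prob_space \<mu> by fact
  assume "emeasure \<mu> E \<noteq> 0"
  then have "emeasure \<mu> E = 1" using assms(1) E unfolding ergodic_map_def by blast
  then have "AE x in \<mu>. x \<in> E" using E by (simp add: AE_in_set_eq_1 emeasure_eq_measure)
  moreover have "cmod (m0 x) = 1" if "x \<in> E" for x
    using that E(2) unique QMF_norm_eq_1_if_unique_preimage[OF assms(3)] by blast
  ultimately have "AE x in \<mu>. cmod (m0 x) = 1" by (auto elim: AE_mp)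
  with assms(4) show False ..
qed

lemma vimage_periodic_orbits_eq:
  assumes "0 < p" and G: "\<And>x. x \<in> G \<Longrightarrow> (r ^^ p) x = x \<and> card (r -` {x}) = 1"
  shows "r -` {x. \<forall>j. (r ^^ j) x \<in> G} = {x. \<forall>j. (r ^^ j) x \<in> G}"
proof (intro set_eqI iffI)
  fix x assume "x \<in> {x. \<forall>j. (r ^^ j) x \<in> G}"
  then have "(r ^^ Suc j) x \<in> G" for j by blast
  then show "x \<in> r -` {x. \<forall>j. (r ^^ j) x \<in> G}"
    by (simp only: funpow_Suc_right comp_apply vimage_eq mem_Collect_eq) blast
next
  fix y assume "y \<in> r -` {x. \<forall>j. (r ^^ j) x \<in> G}"
  then have orbit: "\<And>j. (r ^^ j) (r y) \<in> G" by simp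
  obtain q where p: "p = Suc q" using \<open>0 < p\<close> gr0_implies_Suc by blast
  have "(r ^^ q) (r y) \<in> r -` {r y}"
    using G[OF orbit[of 0]] by (simp add: p funpow_swap1)
  moreover have "y \<in> r -` {r y}" by simp
  ultimately have "y = (r ^^ q) (r y)"
    using G[OF orbit[of 0]] card_1_singletonE[of "r -` {r y}"] by (metis funpow_0 singletonD)
  then have "(r ^^ j) y = (r ^^ (j + q)) (r y)" for j
    by (simp add: funpow_add)
  then show "y \<in> {x. \<forall>j. (r ^^ j) x \<in> G}" using orbit by simp
qed

lemma periodic_points_null:
  fixes r :: "'a::metric_space \<Rightarrow> 'a"
  assumes "compact (UNIV :: 'a set)"
    and fin: "\<forall>x. finite (r -` {x})" and "surj r" and r: "r \<in> borel_measurable borel"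
    and "prob_space \<mu>" and sets_\<mu>: "sets \<mu> = sets borel"
    and inv: "strongly_invariant \<mu> r" and "ergodic_map \<mu> r"
    and "QMF r m0" and "\<not> (AE x in \<mu>. cmod (m0 x) = 1)" and "0 < p"
  shows "emeasure \<mu> {x. (r ^^ p) x = x} = 0"
proof -
  interpret prob_space \<mu> by fact
  have space_\<mu>: "space \<mu> = UNIV" using sets_eq_imp_space_eq[OF sets_\<mu>] by simp
  define Q where "Q = {x. (r ^^ p) x = x}"
  have Q: "Q \<in> sets borel" unfolding Q_def by (rule sets_periodic_points[OF assms(1) r])
  have "(\<Sum>y\<in>r -` {x}. indicator Q y) = (indicator Q x :: real)" for x
    using vimage_inter_periodic_points[OF \<open>0 < p\<close>, of r x] fin
    by (simp add: sum_indicator_eq_card Q_def indicator_def)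
  then have "AE x in \<mu>. x \<in> Q \<longrightarrow> npre r x = 1"
    by (rule strongly_invariant_AE_unique_preimage[OF inv \<open>prob_space \<mu>\<close> sets_\<mu> fin \<open>surj r\<close> Q])
  then obtain N where "\<And>x. x \<in> space \<mu> - N \<Longrightarrow> x \<in> Q \<longrightarrow> npre r x = 1" and N: "N \<in> null_sets \<mu>"
    by (elim AE_E3) blast
  then have unique: "card (r -` {x}) = 1" if "x \<in> Q - N" for x
    using that by (simp add: space_\<mu> npre_def)
  have N_borel: "N \<in> sets borel" using N sets_\<mu> by auto
  define E where "E = {x. \<forall>j. (r ^^ j) x \<in> Q - N}"
  have "E = (\<Inter>j. (r ^^ j) -` (Q - N))" unfolding E_def by auto
  then have E: "E \<in> sets \<mu>"
    using Q N_borel measurable_compose_n[OF r] sets_\<mu> by (auto intro: measurable_sets_borel)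
  have rE: "r -` E = E"
    unfolding E_def using \<open>0 < p\<close> unique by (intro vimage_periodic_orbits_eq) (auto simp: Q_def)
  have "emeasure \<mu> E = 0"
  proof (rule ergodic_unique_preimage_set_null[OF assms(8,5,9,10) E rE])
    fix x assume "x \<in> E"
    then have "(r ^^ 0) x \<in> Q - N" unfolding E_def by blast
    then show "card (r -` {x}) = 1" using unique by simp
  qed
  have "(r ^^ j) -` N \<in> null_sets \<mu>" for j
    using strongly_invariant_emeasure_vimage_funpow[OF inv \<open>prob_space \<mu>\<close> sets_\<mu> fin \<open>surj r\<close> r N_borel]
      N measurable_sets_borel[OF measurable_compose_n[OF r] N_borel] sets_\<mu>
    by (auto simp: null_sets_def)
  then have "E \<union> (\<Union>j. (r ^^ j) -` N) \<in> null_sets \<mu>"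
    using E \<open>emeasure \<mu> E = 0\<close> by (auto intro: null_sets_UN)
  \<comment> \<open>Q is forward invariant, so an orbit in Q that leaves Q - N must enter N\<close>
  moreover have "Q \<subseteq> E \<union> (\<Union>j. (r ^^ j) -` N)"
  proof
    fix x assume "x \<in> Q"
    have "(r ^^ j) x \<in> Q" for j
    proof -
      have "(r ^^ p) ((r ^^ j) x) = (r ^^ j) ((r ^^ p) x)"
        by (metis add.commute comp_apply funpow_add)
      then show ?thesis using \<open>x \<in> Q\<close> by (simp add: Q_def)
    qed
    then show "x \<in> E \<union> (\<Union>j. (r ^^ j) -` N)" unfolding E_def by blast
  qed
  ultimately have "Q \<in> null_sets \<mu>"
    using Q sets_\<mu> by (metis null_sets_subset)
  then show ?thesis unfolding Q_def by (rule null_setsD1)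
qed

section \<open>The measure on the solenoid\<close>

lemma measurable_mu_inf_component:
  assumes "is_mu_inf \<mu> r m0 M"
  shows "(\<lambda>z. z k) \<in> measurable M (borel :: 'a::topological_space measure)"
proof -
  have sets_M: "sets M = sets (PiM UNIV (\<lambda>_::nat. borel :: 'a measure))"
    using assms unfolding is_mu_inf_def by blast
  show ?thesis
    unfolding measurable_cong_sets[OF sets_M refl] by (rule measurable_component_singleton) simp
qed

lemma sets_mu_inf_cylinder:
  assumes "is_mu_inf \<mu> r m0 M" and "\<And>k. k \<le> n \<Longrightarrow> A k \<in> sets (borel :: 'a::topological_space measure)"
  shows "{z \<in> space M. \<forall>k\<le>n. z k \<in> A k} \<in> sets M"
proof -
  have "{z \<in> space M. z k \<in> A k} \<in> sets M" if "k \<in> {..n}" for k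
  proof -
    have "(\<lambda>z. z k) -` A k \<inter> space M \<in> sets M"
      using measurable_mu_inf_component[OF assms(1)] assms(2) that by (intro measurable_sets) auto
    moreover have "(\<lambda>z. z k) -` A k \<inter> space M = {z \<in> space M. z k \<in> A k}" by blast
    ultimately show ?thesis by simp
  qed
  then have "{z \<in> space M. \<forall>k\<in>{..n}. z k \<in> A k} \<in> sets M"
    by (rule sets.sets_Collect_finite_All) auto
  then show ?thesis by (simp only: atMost_iff Ball_def)
qed

lemma emeasure_mu_inf_cylinder:
  assumes "is_mu_inf \<mu> r m0 M" and "\<And>k. k \<le> n \<Longrightarrow> A k \<in> sets (borel :: 'a::topological_space measure)"
  shows "emeasure M {z \<in> space M. \<forall>k\<le>n. z k \<in> A k} =
      (\<integral>\<^sup>+ x. ennreal (\<Sum>y\<in>paths r x n.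
         (\<Prod>k\<in>{1..n}. Wf r m0 (y k)) * (\<Prod>k\<in>{0..n}. indicator (A k) (y k))) \<partial>\<mu>)"
  using conjunct2[OF assms(1)[unfolded is_mu_inf_def], rule_format, of n A] assms(2) by blast

lemma null_sets_mu_inf_cylinder:
  assumes "is_mu_inf \<mu> r m0 M" and "\<And>k. k \<le> n \<Longrightarrow> A k \<in> sets (borel :: 'a::topological_space measure)"
    and "\<And>x y. y \<in> paths r x n \<Longrightarrow>
      (\<Prod>k\<in>{1..n}. Wf r m0 (y k)) * (\<Prod>k\<in>{0..n}. indicator (A k) (y k)) = 0"
  shows "{z \<in> space M. \<forall>k\<le>n. z k \<in> A k} \<in> null_sets M"
proof -
  have "(\<Sum>y\<in>paths r x n. (\<Prod>k\<in>{1..n}. Wf r m0 (y k)) * (\<Prod>k\<in>{0..n}. indicator (A k) (y k))) = 0" for x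
    using assms(3) by (intro sum.neutral) blast
  then have "emeasure M {z \<in> space M. \<forall>k\<le>n. z k \<in> A k} = 0"
    by (simp only: emeasure_mu_inf_cylinder[OF assms(1,2)]) simp
  then show ?thesis using sets_mu_inf_cylinder[OF assms(1,2)] by (intro null_setsI)
qed

lemma paths_0: "paths r x 0 = {\<lambda>_. x}"
proof -
  have "y 0 = x \<and> (\<forall>k>0. y k = x) \<longleftrightarrow> y = (\<lambda>_. x)" for y :: "nat \<Rightarrow> 'a"
    by (auto simp: fun_eq_iff) (metis neq0_conv)
  then show ?thesis unfolding paths_def by auto
qed

lemma AE_mu_inf_initial_not_in:
  assumes "is_mu_inf \<mu> r m0 M" and "sets \<mu> = sets borel"
    and "A \<in> sets (borel :: 'a::topological_space measure)" and "emeasure \<mu> A = 0"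
  shows "AE z in M. z 0 \<notin> A"
proof -
  have "emeasure M {z \<in> space M. \<forall>k\<le>0. z k \<in> A} = (\<integral>\<^sup>+ x. indicator A x \<partial>\<mu>)"
    using emeasure_mu_inf_cylinder[OF assms(1), of 0 "\<lambda>_. A"] assms(3) by (simp add: paths_0 ennreal_indicator)
  also have "\<dots> = 0"
    using assms(2-4) by simp
  finally have "{z \<in> space M. \<forall>k\<le>0. z k \<in> A} \<in> null_sets M"
    using sets_mu_inf_cylinder[OF assms(1), of 0 "\<lambda>_. A"] assms(3) by (intro null_setsI) auto
  then show ?thesis
    by (rule AE_I') auto
qed

lemma AE_mu_inf_solenoid:
  fixes r :: "'a::metric_space \<Rightarrow> 'a"
  assumes "compact (UNIV :: 'a set)" and r: "r \<in> borel_measurable borel"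
    and M: "is_mu_inf \<mu> r m0 M"
  shows "AE z in M. z \<in> solenoid r"
  unfolding solenoid_def mem_Collect_eq AE_all_countable
proof
  fix n
  obtain I :: "('a set \<times> 'a set) set" where "countable I"
    and I_open: "\<And>p. p \<in> I \<Longrightarrow> open (fst p) \<and> open (snd p)"
    and I_sep: "\<And>a b. a \<noteq> b \<longleftrightarrow> (\<exists>p\<in>I. a \<in> fst p \<and> b \<in> snd p)"
    using compact_metric_separating_pairs[OF assms(1)] by blast
  define A where "A p k = (if k = n then snd p else if k = Suc n then r -` fst p else UNIV)" for p k
  have "{z \<in> space M. \<forall>k\<le>Suc n. z k \<in> A p k} \<in> null_sets M" if "p \<in> I" for p
  proof (rule null_sets_mu_inf_cylinder[OF M])
    show "A p k \<in> sets borel" for k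
      using I_open[OF that] measurable_sets_borel[OF r] by (simp add: A_def)
    \<comment> \<open>along a path r (y (n + 1)) = y n, and no point lies in both sets of a separating pair\<close>
    fix x y assume "y \<in> paths r x (Suc n)"
    then have "r (y (Suc n)) = y n" unfolding paths_def by simp
    then have "\<exists>k\<in>{0..Suc n}. indicator (A p k) (y k) = (0::real)"
      using I_sep[of "y n" "y n"] that by (cases "y n \<in> snd p") (auto simp: A_def intro: bexI[of _ n])
    then have "(\<Prod>k\<in>{0..Suc n}. indicator (A p k) (y k)) = (0::real)"
      by (intro prod_zero) auto
    then show "(\<Prod>k\<in>{1..Suc n}. Wf r m0 (y k)) * (\<Prod>k\<in>{0..Suc n}. indicator (A p k) (y k)) = 0"
      by simp
  qed
  then have "(\<Union>p\<in>I. {z \<in> space M. \<forall>k\<le>Suc n. z k \<in> A p k}) \<in> null_sets M"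
    by (rule null_sets_UN'[OF \<open>countable I\<close>])
  moreover have "{z \<in> space M. r (z (Suc n)) \<noteq> z n} \<subseteq> (\<Union>p\<in>I. {z \<in> space M. \<forall>k\<le>Suc n. z k \<in> A p k})"
    using I_sep by (fastforce simp: A_def)
  ultimately show "AE z in M. r (z (Suc n)) = z n"
    by (rule AE_I')
qed

lemma AE_mu_inf_m0_nonzero:
  assumes M: "is_mu_inf \<mu> r m0 M" and m0: "m0 \<in> borel_measurable borel"
  shows "AE z in M. \<forall>j. m0 (z (Suc j)) \<noteq> 0"
  unfolding AE_all_countable
proof
  fix j
  define A where "A k = (if k = Suc j then m0 -` {0} else UNIV)" for k
  have "{z \<in> space M. \<forall>k\<le>Suc j. z k \<in> A k} \<in> null_sets M"
  proof (rule null_sets_mu_inf_cylinder[OF M])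
    show "A k \<in> sets borel" for k
      using measurable_sets_borel[OF m0 borel_singleton[OF sets.empty_sets]] by (simp add: A_def)
    fix x y
    have "(\<Prod>k\<in>{1..Suc j}. Wf r m0 (y k)) = 0 \<or> (\<Prod>k\<in>{0..Suc j}. indicator (A k) (y k)) = (0::real)"
    proof (cases "m0 (y (Suc j)) = 0")
      case True
      then have "Wf r m0 (y (Suc j)) = 0" by (simp add: Wf_def)
      then show ?thesis by (intro disjI1 prod_zero bexI[of _ "Suc j"]) auto
    next
      case False
      then have "indicator (A (Suc j)) (y (Suc j)) = (0::real)" by (simp add: A_def)
      then show ?thesis by (intro disjI2 prod_zero bexI[of _ "Suc j"]) auto
    qed
    then show "(\<Prod>k\<in>{1..Suc j}. Wf r m0 (y k)) * (\<Prod>k\<in>{0..Suc j}. indicator (A k) (y k)) = 0"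
      by simp
  qed
  then show "AE z in M. m0 (z (Suc j)) \<noteq> 0"
    by (rule AE_I') (auto simp: A_def)
qed

lemma AE_mu_inf_forward_orbit_not_in:
  assumes "is_mu_inf \<mu> r m0 M" and "strongly_invariant \<mu> r" "prob_space \<mu>" "sets \<mu> = sets borel"
    and "\<forall>x. finite (r -` {x})" "surj r" "r \<in> borel_measurable borel"
    and "A \<in> sets borel" "emeasure \<mu> A = 0"
  shows "AE z in M. \<forall>j. (r ^^ j) (z 0) \<notin> A"
  unfolding AE_all_countable
proof
  fix j
  have "(r ^^ j) -` A \<in> sets borel"
    using measurable_compose_n[OF assms(7)] assms(8) by (rule measurable_sets_borel)
  moreover have "emeasure \<mu> ((r ^^ j) -` A) = 0"
    using strongly_invariant_emeasure_vimage_funpow[OF assms(2-8)] assms(9) by simp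
  ultimately have "AE z in M. z 0 \<notin> (r ^^ j) -` A"
    by (rule AE_mu_inf_initial_not_in[OF assms(1,4)])
  then show "AE z in M. (r ^^ j) (z 0) \<notin> A" by simp
qed

section \<open>The representation attached to a point of the solenoid\<close>

definition solenoid_orbit :: "('a \<Rightarrow> 'a) \<Rightarrow> (nat \<Rightarrow> 'a) \<Rightarrow> int \<Rightarrow> 'a" where
  "solenoid_orbit r z n = theta0 (rinf_pow r n z)"

lemma solenoid_orbit_nonneg: "0 \<le> n \<Longrightarrow> solenoid_orbit r z n = (r ^^ nat n) (z 0)"
proof -
  have "(rinf r ^^ k) z 0 = (r ^^ k) (z 0)" for k
    by (induction k) (simp_all add: rinf_def)
  then show "0 \<le> n \<Longrightarrow> ?thesis" by (simp add: solenoid_orbit_def rinf_pow_def theta0_def)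
qed

lemma solenoid_orbit_nonpos: "n \<le> 0 \<Longrightarrow> solenoid_orbit r z n = z (nat (- n))"
proof -
  have "(lshift ^^ k) z i = z (i + k)" for k i
    by (induction k arbitrary: i) (simp_all add: lshift_def)
  then show "n \<le> 0 \<Longrightarrow> ?thesis" by (simp add: solenoid_orbit_def rinf_pow_def theta0_def)
qed

lemma solenoid_orbit_Suc:
  assumes "z \<in> solenoid r"
  shows "r (solenoid_orbit r z n) = solenoid_orbit r z (n + 1)"
proof (cases "0 \<le> n")
  case True
  then have "nat (n + 1) = Suc (nat n)" by simp
  then show ?thesis using True by (simp add: solenoid_orbit_nonneg)
next
  case False
  then have "nat (- n) = Suc (nat (- (n + 1)))" by simp
  then show ?thesis
    using False assms by (simp add: solenoid_orbit_nonpos solenoid_def)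
qed

lemma solenoid_orbit_add:
  assumes "z \<in> solenoid r"
  shows "solenoid_orbit r z (n + int p) = (r ^^ p) (solenoid_orbit r z n)"
proof (induction p)
  case (Suc p)
  have "solenoid_orbit r z (n + int (Suc p)) = r (solenoid_orbit r z (n + int p))"
    using solenoid_orbit_Suc[OF assms, of "n + int p"] by (simp add: algebra_simps)
  then show ?case using Suc.IH by simp
qed simp

lemma inj_solenoid_orbit:
  assumes "z \<in> solenoid r"
    and aperiodic: "\<forall>p j. 0 < p \<longrightarrow> (r ^^ p) ((r ^^ j) (z 0)) \<noteq> (r ^^ j) (z 0)"
  shows "inj (solenoid_orbit r z)"
proof -
  \<comment> \<open>shifting a coincidence x n = x m to the right of 0 produces a periodic point r^j(z 0)\<close>
  have "solenoid_orbit r z n \<noteq> solenoid_orbit r z m" if "n < m" for n m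
  proof
    assume "solenoid_orbit r z n = solenoid_orbit r z m"
    define k where "k = nat \<bar>n\<bar>"
    have "solenoid_orbit r z (n + int k) = solenoid_orbit r z (m + int k)"
      using \<open>solenoid_orbit r z n = solenoid_orbit r z m\<close> by (simp add: solenoid_orbit_add[OF assms(1)])
    also have "\<dots> = (r ^^ nat (m - n)) (solenoid_orbit r z (n + int k))"
      using solenoid_orbit_add[OF assms(1), of "n + int k" "nat (m - n)"] \<open>n < m\<close> by (simp add: algebra_simps)
    finally show False
      using aperiodic[rule_format, of "nat (m - n)" "nat (n + int k)"] \<open>n < m\<close>
        solenoid_orbit_nonneg[of "n + int k" r z] by (simp add: k_def)
  qed
  then show ?thesis
    by (metis injI linorder_neqE)
qed

lemma m0_solenoid_orbit_nonzero:
  assumes "\<forall>j. m0 (z (Suc j)) \<noteq> 0" and "\<forall>j. m0 ((r ^^ j) (z 0)) \<noteq> 0"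
  shows "m0 (solenoid_orbit r z n) \<noteq> 0"
proof (cases "0 \<le> n")
  case False
  then have "nat (- n) = Suc (nat (- n) - 1)" by simp
  then show ?thesis using False assms(1) by (metis solenoid_orbit_nonpos linorder_linear)
qed (simp add: solenoid_orbit_nonneg assms(2))

lemma mt_solenoid_orbit:
  "mt r m0 n z = (if n = 0 then 1 else if 0 < n then (\<Prod>k\<in>{0..<n}. m0 (solenoid_orbit r z k))
     else 1 / (\<Prod>k\<in>{n..<0}. m0 (solenoid_orbit r z k)))"
  by (simp add: mt_def solenoid_orbit_def)

lemma Uz_solenoid_orbit: "Uz r m0 z \<xi> = (\<lambda>n. m0 (solenoid_orbit r z n) * \<xi> (n + 1))"
  by (simp add: Uz_def solenoid_orbit_def)

lemma piz_solenoid_orbit: "piz r z f \<xi> = (\<lambda>n. f (solenoid_orbit r z n) * \<xi> n)"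
  by (simp add: piz_def solenoid_orbit_def)

lemma summable_on_shift_int: "(\<lambda>n::int. f (n + c)) summable_on UNIV \<longleftrightarrow> f summable_on UNIV"
  using summable_on_reindex_bij_betw[of "\<lambda>n. n + c" UNIV UNIV f]
  by (simp add: bij_betw_def inj_def surj_def)

lemma infsum_shift_int: "(\<Sum>\<^sub>\<infinity>n::int. f (n + c)) = (\<Sum>\<^sub>\<infinity>n. f n)"
  using infsum_reindex_bij_betw[of "\<lambda>n. n + c" UNIV UNIV f]
  by (simp add: bij_betw_def inj_def surj_def)

context
  fixes r :: "'a \<Rightarrow> 'a" and m0 :: "'a \<Rightarrow> complex" and z :: "nat \<Rightarrow> 'a"
  assumes m0_nonzero: "\<And>k. m0 (solenoid_orbit r z k) \<noteq> 0"
begin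

lemma mt_add_1: "mt r m0 (n + 1) z = mt r m0 n z * m0 (solenoid_orbit r z n)"
proof (cases "0 \<le> n")
  case True
  then have "{0..<n + 1} = insert n {0..<n}" by auto
  then show ?thesis using True by (auto simp: mt_solenoid_orbit mult.commute)
next
  case False
  then have "{n..<0} = insert n {n + 1..<0}" by auto
  then show ?thesis using False m0_nonzero by (auto simp: mt_solenoid_orbit)
qed

lemma mt_nonzero: "mt r m0 n z \<noteq> 0"
  using m0_nonzero by (simp add: mt_solenoid_orbit prod_zero_iff)

lemma Hz_weight_Uz:
  "(cmod (Uz r m0 z \<xi> n))\<^sup>2 * (cmod (mt r m0 n z))\<^sup>2 = (cmod (\<xi> (n + 1)))\<^sup>2 * (cmod (mt r m0 (n + 1) z))\<^sup>2"
  by (simp add: Uz_solenoid_orbit mt_add_1 norm_mult power_mult_distrib)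

lemma Uz_in_Hz: "\<xi> \<in> Hz r m0 z \<Longrightarrow> Uz r m0 z \<xi> \<in> Hz r m0 z"
  using summable_on_shift_int[of "\<lambda>n. (cmod (\<xi> n))\<^sup>2 * (cmod (mt r m0 n z))\<^sup>2" 1]
  by (simp add: Hz_def Hz_weight_Uz)

lemma Hnorm_Uz: "Hnorm r m0 z (Uz r m0 z \<xi>) = Hnorm r m0 z \<xi>"
  unfolding Hnorm_def Hz_weight_Uz
  using infsum_shift_int[of "\<lambda>n. (cmod (\<xi> n))\<^sup>2 * (cmod (mt r m0 n z))\<^sup>2" 1] by simp

lemma Hip_Uz: "Hip r m0 z (Uz r m0 z \<xi>) (Uz r m0 z \<eta>) = Hip r m0 z \<xi> \<eta>"
proof -
  have "Uz r m0 z \<xi> n * cnj (Uz r m0 z \<eta> n) * complex_of_real ((cmod (mt r m0 n z))\<^sup>2) =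
      \<xi> (n + 1) * cnj (\<eta> (n + 1)) * complex_of_real ((cmod (mt r m0 (n + 1) z))\<^sup>2)" for n
    using complex_norm_square[of "m0 (solenoid_orbit r z n)"]
    by (simp add: Uz_solenoid_orbit mt_add_1 norm_mult power_mult_distrib mult_ac)
  then show ?thesis
    unfolding Hip_def
    using infsum_shift_int[of "\<lambda>n. \<xi> n * cnj (\<eta> n) * complex_of_real ((cmod (mt r m0 n z))\<^sup>2)" 1]
    by simp
qed

lemma inj_Uz: "inj (Uz r m0 z)"
proof (rule injI)
  fix \<xi> \<eta> assume "Uz r m0 z \<xi> = Uz r m0 z \<eta>"
  then have "Uz r m0 z \<xi> (n - 1) = Uz r m0 z \<eta> (n - 1)" for n by simp
  then show "\<xi> = \<eta>" using m0_nonzero by (simp add: Uz_solenoid_orbit fun_eq_iff)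
qed

lemma Hz_subset_Uz_image: "Hz r m0 z \<subseteq> Uz r m0 z ` Hz r m0 z"
proof
  fix \<eta> assume \<eta>: "\<eta> \<in> Hz r m0 z"
  define \<xi> where "\<xi> n = \<eta> (n - 1) / m0 (solenoid_orbit r z (n - 1))" for n
  have "Uz r m0 z \<xi> = \<eta>" by (simp add: \<xi>_def Uz_solenoid_orbit m0_nonzero)
  moreover have "(cmod (\<xi> n))\<^sup>2 * (cmod (mt r m0 n z))\<^sup>2 =
      (cmod (\<eta> (n + -1)))\<^sup>2 * (cmod (mt r m0 (n + -1) z))\<^sup>2" for n
    using mt_add_1[of "n - 1"] m0_nonzero[of "n - 1"]
    by (simp add: \<xi>_def norm_mult norm_divide power_mult_distrib power_divide)
  then have "\<xi> \<in> Hz r m0 z"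
    using \<eta> summable_on_shift_int[of "\<lambda>n. (cmod (\<eta> n))\<^sup>2 * (cmod (mt r m0 n z))\<^sup>2" "-1"]
    by (simp add: Hz_def)
  ultimately show "\<eta> \<in> Uz r m0 z ` Hz r m0 z" by blast
qed

lemma unitary_on_Hz: "unitary_on_Hz r m0 z"
  unfolding unitary_on_Hz_def bounded_op_on_def bij_betw_def
  using Uz_in_Hz Hnorm_Uz Hip_Uz inj_Uz Hz_subset_Uz_image
  by (auto simp: inj_on_subset[OF inj_Uz] Uz_solenoid_orbit algebra_simps intro!: exI[of _ 1])

end

lemma bounded_borel_norm_bound:
  assumes "bounded_borel f"
  obtains B where "0 \<le> B" and "\<And>x. cmod (f x) \<le> B"
proof -
  obtain B where "\<forall>y\<in>range f. norm y \<le> B"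
    using assms unfolding bounded_borel_def bounded_iff by blast
  then have "\<And>x. cmod (f x) \<le> B" by simp
  moreover have "0 \<le> B" using calculation[of undefined] norm_ge_zero[of "f undefined"] by linarith
  ultimately show ?thesis by (rule that[rotated])
qed

lemma bounded_op_on_piz:
  assumes "bounded_borel f"
  shows "bounded_op_on (Hz r m0 z) (Hnorm r m0 z) (piz r z f)"
proof -
  obtain B where "0 \<le> B" and B: "\<And>x. cmod (f x) \<le> B"
    using bounded_borel_norm_bound[OF assms] by blast
  define w where "w \<xi> n = (cmod (\<xi> n))\<^sup>2 * (cmod (mt r m0 n z))\<^sup>2" for \<xi> n
  have w_piz: "w (piz r z f \<xi>) n \<le> B\<^sup>2 * w \<xi> n" for \<xi> n
  proof -
    have "(cmod (f (solenoid_orbit r z n)))\<^sup>2 \<le> B\<^sup>2" using B by (simp add: power_mono)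
    then show ?thesis
      unfolding w_def piz_solenoid_orbit
      by (simp add: norm_mult power_mult_distrib mult_right_mono mult.assoc)
  qed
  have summable: "w \<xi> summable_on UNIV" "w (piz r z f \<xi>) summable_on UNIV" if "\<xi> \<in> Hz r m0 z" for \<xi>
  proof -
    show "w \<xi> summable_on UNIV" using that by (simp add: Hz_def w_def[abs_def])
    then show "w (piz r z f \<xi>) summable_on UNIV"
      using w_piz by (rule summable_on_comparison_test[OF summable_on_cmult_right]) (simp add: w_def)
  qed
  have "Hnorm r m0 z (piz r z f \<xi>) \<le> B * Hnorm r m0 z \<xi>" if "\<xi> \<in> Hz r m0 z" for \<xi>
  proof -
    have "(\<Sum>\<^sub>\<infinity>n. w (piz r z f \<xi>) n) \<le> B\<^sup>2 * (\<Sum>\<^sub>\<infinity>n. w \<xi> n)"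
      using infsum_mono[OF summable(2)[OF that] summable_on_cmult_right[OF summable(1)[OF that]] w_piz]
      by (simp add: infsum_cmult_right')
    then have "sqrt (\<Sum>\<^sub>\<infinity>n. w (piz r z f \<xi>) n) \<le> B * sqrt (\<Sum>\<^sub>\<infinity>n. w \<xi> n)"
      using \<open>0 \<le> B\<close> by (metis real_sqrt_le_mono real_sqrt_mult real_sqrt_abs abs_of_nonneg power2_eq_square)
    then show ?thesis by (simp add: Hnorm_def w_def)
  qed
  moreover have "piz r z f \<xi> \<in> Hz r m0 z" if "\<xi> \<in> Hz r m0 z" for \<xi>
    using summable(2)[OF that] by (simp add: Hz_def w_def[abs_def])
  ultimately show ?thesis
    unfolding bounded_op_on_def by (auto simp: piz_solenoid_orbit algebra_simps)
qed

lemma covariant_rep_Hz: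
  assumes "\<And>k. m0 (solenoid_orbit r z k) \<noteq> 0" and "z \<in> solenoid r"
  shows "covariant_rep_Hz r m0 z"
  unfolding covariant_rep_Hz_def
proof (intro conjI allI impI ballI)
  fix f :: "'a \<Rightarrow> complex" and \<xi> assume "\<xi> \<in> Hz r m0 z"
  then obtain \<eta> where "\<eta> \<in> Hz r m0 z" and \<xi>: "\<xi> = Uz r m0 z \<eta>"
    using Hz_subset_Uz_image[of m0 r z, OF assms(1)] by blast
  then have "the_inv_into (Hz r m0 z) (Uz r m0 z) \<xi> = \<eta>"
    using inj_Uz[of m0 r z, OF assms(1)] by (simp add: the_inv_into_f_f inj_on_subset)
  then show "Uz r m0 z (piz r z f (the_inv_into (Hz r m0 z) (Uz r m0 z) \<xi>)) = piz r z (f \<circ> r) \<xi>"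
    using solenoid_orbit_Suc[OF assms(2)] by (simp add: \<xi> Uz_solenoid_orbit piz_solenoid_orbit mult_ac)
qed (auto simp: bounded_op_on_piz piz_solenoid_orbit Hip_def algebra_simps)

lemma bounded_op_on_scale:
  assumes "bounded_op_on H nrm T" and "(\<lambda>_. 0) \<in> H" and "\<xi> \<in> H"
  shows "T (\<lambda>n. c * \<xi> n) = (\<lambda>n. c * T \<xi> n)"
proof -
  have lin: "\<And>\<xi> \<eta> c. \<xi> \<in> H \<Longrightarrow> \<eta> \<in> H \<Longrightarrow> T (\<lambda>n. c * \<xi> n + \<eta> n) = (\<lambda>n. c * T \<xi> n + T \<eta> n)"
    using assms(1) unfolding bounded_op_on_def by blast
  have "T (\<lambda>_. 0) = (\<lambda>n. T (\<lambda>_. 0) n + T (\<lambda>_. 0) n)"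
    using lin[OF assms(2) assms(2), of 1] by simp
  then have "T (\<lambda>_. 0) = (\<lambda>_. 0)" by (simp add: fun_eq_iff)
  then show ?thesis using lin[OF assms(3) assms(2), of c] by simp
qed

lemma delta_in_Hz: "(\<lambda>n. if n = k then c else 0) \<in> Hz r m0 z"
proof -
  let ?w = "\<lambda>n. (cmod (if n = k then c else 0))\<^sup>2 * (cmod (mt r m0 n z))\<^sup>2"
  have "?w summable_on {k} \<longleftrightarrow> ?w summable_on UNIV"
    by (rule summable_on_cong_neutral) auto
  then show ?thesis unfolding Hz_def by simp
qed

lemma piz_indicator_solenoid_orbit:
  assumes "inj (solenoid_orbit r z)"
  shows "piz r z (indicator {solenoid_orbit r z k}) \<xi> = (\<lambda>n. if n = k then \<xi> n else 0)"
  using injD[OF assms] by (auto simp: piz_solenoid_orbit indicator_def fun_eq_iff)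

lemma irreducible_Hz:
  fixes r :: "'a::t1_space \<Rightarrow> 'a"
  assumes m0_nonzero: "\<And>k. m0 (solenoid_orbit r z k) \<noteq> 0" and inj: "inj (solenoid_orbit r z)"
  shows "irreducible_Hz r m0 z"
  unfolding irreducible_Hz_def
proof (intro allI impI)
  fix T assume T: "bounded_op_on (Hz r m0 z) (Hnorm r m0 z) T"
    and TU: "\<forall>\<xi>\<in>Hz r m0 z. T (Uz r m0 z \<xi>) = Uz r m0 z (T \<xi>)"
    and Tpi: "\<forall>f. bounded_borel f \<longrightarrow> (\<forall>\<xi>\<in>Hz r m0 z. T (piz r z f \<xi>) = piz r z f (T \<xi>))"
  define e where "e k = (\<lambda>n::int. if n = k then (1::complex) else 0)" for k
  have e: "e k \<in> Hz r m0 z" for k unfolding e_def by (rule delta_in_Hz)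
  have zero: "(\<lambda>_. 0) \<in> Hz r m0 z" using delta_in_Hz[of 0 0] by simp
  have "bounded_borel (indicator {solenoid_orbit r z k} :: 'a \<Rightarrow> complex)" for k
  proof -
    have "bounded (range (indicator {solenoid_orbit r z k} :: 'a \<Rightarrow> complex))"
      by (rule bounded_subset[of "{0, 1}"]) (auto simp: indicator_def)
    then show ?thesis
      unfolding bounded_borel_def by (simp add: borel_measurable_indicator borel_closed)
  qed
  \<comment> \<open>commuting with the multiplication operators, T is diagonal\<close>
  then have diagonal: "T \<xi> k = T (e k) k * \<xi> k" if "\<xi> \<in> Hz r m0 z" for \<xi> k
  proof -
    let ?P = "piz r z (indicator {solenoid_orbit r z k})"
    have "?P \<xi> = (\<lambda>n. \<xi> k * e k n)"
      by (auto simp: piz_indicator_solenoid_orbit[OF inj] e_def)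
    moreover have "T (?P \<xi>) = ?P (T \<xi>)"
      using Tpi \<open>bounded_borel (indicator {solenoid_orbit r z k})\<close> that by blast
    ultimately have "(\<lambda>n. \<xi> k * T (e k) n) = ?P (T \<xi>)"
      by (simp add: bounded_op_on_scale[OF T zero e])
    then have "\<xi> k * T (e k) k = ?P (T \<xi>) k" by (rule fun_cong)
    then show ?thesis by (simp add: piz_indicator_solenoid_orbit[OF inj] mult.commute)
  qed
  \<comment> \<open>commuting with U, the diagonal entries are constant\<close>
  have "T (e (k + 1)) (k + 1) = T (e k) k" for k
  proof -
    have "Uz r m0 z (e (k + 1)) = (\<lambda>n. m0 (solenoid_orbit r z k) * e k n)"
      by (auto simp: Uz_solenoid_orbit e_def)
    moreover have "T (Uz r m0 z (e (k + 1))) = Uz r m0 z (T (e (k + 1)))"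
      using TU e by blast
    ultimately have "(\<lambda>n. m0 (solenoid_orbit r z k) * T (e k) n) = Uz r m0 z (T (e (k + 1)))"
      by (simp add: bounded_op_on_scale[OF T zero e])
    then have "m0 (solenoid_orbit r z k) * T (e k) k = Uz r m0 z (T (e (k + 1))) k"
      by (rule fun_cong)
    also have "\<dots> = m0 (solenoid_orbit r z k) * T (e (k + 1)) (k + 1)"
      using diagonal[OF e, of "k + 1" "k + 1"] by (simp add: Uz_solenoid_orbit e_def)
    finally show ?thesis using m0_nonzero by simp
  qed
  then have "T (e k) k = T (e 0) 0" for k
  proof (induction k rule: int_induct[where k = 0])
    case (step2 i)
    then show ?case using \<open>\<And>k. T (e (k + 1)) (k + 1) = T (e k) k\<close>[of "i - 1"] by simp
  qed simp_all
  then show "\<exists>c. \<forall>\<xi>\<in>Hz r m0 z. T \<xi> = (\<lambda>n. c * \<xi> n)"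
    using diagonal by (auto simp: fun_eq_iff)
qed

theorem lemma3p4:
  fixes r :: "'a::metric_space \<Rightarrow> 'a"
    and \<mu> :: "'a measure"
    and m0 :: "'a \<Rightarrow> complex"
    and M :: "(nat \<Rightarrow> 'a) measure"
  assumes "compact (UNIV :: 'a set)"
    and "\<forall>x. finite (r -` {x})"
    and "surj r"
    and "r \<in> borel_measurable borel"
    and "prob_space \<mu>" and "sets \<mu> = sets borel"
    and "strongly_invariant \<mu> r"
    and "ergodic_map \<mu> r"
    and "QMF r m0"
    and "\<not> (AE x in \<mu>. cmod (m0 x) = 1)"
    and "emeasure \<mu> {x. m0 x = 0} = 0"
    and "integrable \<mu> (\<lambda>x. ln ((cmod (m0 x))\<^sup>2))"
    and "is_mu_inf \<mu> r m0 M"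
  shows "AE z in M. z \<in> solenoid r \<and> (\<forall>n. mt r m0 n z \<noteq> 0) \<and>
           unitary_on_Hz r m0 z \<and> covariant_rep_Hz r m0 z \<and> irreducible_Hz r m0 z"
proof -
  have m0: "m0 \<in> borel_measurable borel" using \<open>QMF r m0\<close> unfolding QMF_def by blast
  have "{x. m0 x = 0} \<in> sets borel" using m0 by measurable
  note forward = AE_mu_inf_forward_orbit_not_in[OF assms(13,7,5,6,2,3,4)]
  have "AE z in M. \<forall>j. m0 ((r ^^ j) (z 0)) \<noteq> 0"
    using forward[OF \<open>{x. m0 x = 0} \<in> sets borel\<close> assms(11)] by simp
  moreover have "AE z in M. \<forall>j. 0 < p \<longrightarrow> (r ^^ p) ((r ^^ j) (z 0)) \<noteq> (r ^^ j) (z 0)" for p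
    using forward[OF sets_periodic_points[OF assms(1,4)] periodic_points_null[OF assms(1-10)], of p]
    by (cases "0 < p") auto
  then have "AE z in M. \<forall>p j. 0 < p \<longrightarrow> (r ^^ p) ((r ^^ j) (z 0)) \<noteq> (r ^^ j) (z 0)"
    by (simp add: AE_all_countable)
  ultimately have "AE z in M. z \<in> solenoid r \<and> (\<forall>k. m0 (solenoid_orbit r z k) \<noteq> 0) \<and> inj (solenoid_orbit r z)"
    using AE_mu_inf_solenoid[OF assms(1,4,13)] AE_mu_inf_m0_nonzero[OF assms(13) m0]
    by eventually_elim (simp add: m0_solenoid_orbit_nonzero inj_solenoid_orbit)
  then show ?thesis
    by eventually_elim (auto simp: mt_nonzero unitary_on_Hz covariant_rep_Hz irreducible_Hz)
qed

end
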